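(* Let $F:[0,\infty)\to[0,\infty)$ be smooth with bounded derivatives of orders $0,1,\dots,n$, and set $\mathcal{F}^*_n=\max\{2^{n-k}\|F^{(k)}\|_\infty:\ 0\le k\le n\}$ where $F^{(k)}=\mathrm{d}^kF/\mathrm{d}x^k$. Let $y\in\mathbb{R}^2$, $\phi$ any locally finite simple marked configuration and $z_1,\dots,z_n\in\mathbb{R}^2$, where the added marks $h_{z_1},\dots,h_{z_n}$ are i.i.d. copies of $h$. Then $$\Big|\mathbb{E}_{h_{z_1},\dots,h_{z_n}}\big[F^{(n)}_{z_1,\dots,z_n}(I(y,\phi))\big]\Big|\le \mathcal{F}^*_n\prod_{i=1}^n\int_0^1 G\Big(\frac{a}{\ell(z_i-y)}\Big)\mathrm{d}a\le \mathcal{F}^*_n\prod_{i=1}^n\min\{1,\mathbb{E}[h]\,\ell(z_i-y)\}.$$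
   Context: Setup: $h\ge 0$ is a random variable (fading) with complementary CDF $G(t)=\mathbb{P}(h>t)$ (with the convention $G(a/0)=G(\infty)=0$). $\ell:\mathbb{R}^2\to[0,\infty)$ depends only on $\|x\|$. A marked configuration $\phi$ is a locally finite simple set of points of $\mathbb{R}^2$, each point $x$ carrying a mark $h_x\ge0$. For $y\in\mathbb{R}^2$, $I(y,\phi)=\sum_{x\in\phi}h_x\ell(x-y)$ and, for $z\in\mathbb{R}^2$, $I_z(y,\phi)=\sum_{x\in\phi\cap B(o,\|z\|)}h_x\ell(x-y)$, $B(o,r)$ the closed ball of radius $r$ about the origin. Ordering: $x\preccurlyeq z$ iff $\|x\|\le\|z\|$. $\|\cdot\|_\infty$ is the essential supremum norm on $[0,\infty)$. Expansion kernels: for points $z_1,\dots,z_n$ with added marks $h_{z_1},\dots,h_{z_n}$, $$F^{(n)}_{z_1,\dots,z_n}(I(y,\phi))=\begin{cases}\sum_{j=0}^n(-1)^{n-j}\sum_{\Pi\subset\{1,\dots,n\},|\Pi|=j}F\big(I_{z_n}(y,\phi)+\sum_{i\in\Pi}h_{z_i}\ell(z_i-y)\big),& z_n\preccurlyeq\cdots\preccurlyeq z_1,\\ 0,&\text{otherwise.}\end{cases}$$ $\mathbb{E}_{h_{z_1},\dots,h_{z_n}}$ is expectation over the added marks only. *)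

theory Defs
  imports "HOL-Probability.Probability"
begin

text \<open>Complementary CDF of the fading distribution M: G(t) = P(h > t).\<close>
definition ccdf :: "real measure \<Rightarrow> real \<Rightarrow> real" where
  "ccdf M t = measure M {x. t < x}"

text \<open>G(a / l) with the convention G(a/0) = G(infinity) = 0.\<close>
definition ccdf_div :: "real measure \<Rightarrow> real \<Rightarrow> real \<Rightarrow> real" where
  "ccdf_div M a l = (if l = 0 then 0 else ccdf M (a / l))"

text \<open>Sup norm on [0,infinity) (for continuous functions equals the essential sup norm).\<close>
definition supnorm0 :: "(real \<Rightarrow> real) \<Rightarrow> real" where
  "supnorm0 f = (SUP x\<in>{0..}. \<bar>f x\<bar>)"

text \<open>Truncated interference I_z(y,phi): configuration = point set P with marks hm.\<close>
definition Itrunc :: "(real^2 \<Rightarrow> real) \<Rightarrow> (real^2) set \<Rightarrow> (real^2 \<Rightarrow> real)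
    \<Rightarrow> real^2 \<Rightarrow> real^2 \<Rightarrow> real" where
  "Itrunc l P hm z y = (\<Sum>x\<in>P \<inter> cball 0 (norm z). hm x * l (x - y))"

text \<open>Expansion kernel F^(n)_{z_1..z_n}(I(y,phi)); points z 1,...,z n with added marks hz 1,...,hz n.\<close>
definition expansion_kernel :: "(real \<Rightarrow> real) \<Rightarrow> (real^2 \<Rightarrow> real) \<Rightarrow> (real^2) set
    \<Rightarrow> (real^2 \<Rightarrow> real) \<Rightarrow> nat \<Rightarrow> (nat \<Rightarrow> real^2) \<Rightarrow> (nat \<Rightarrow> real) \<Rightarrow> real^2 \<Rightarrow> real" where
  "expansion_kernel F l P hm n z hz y =
     (if (\<forall>i\<in>{1..<n}. norm (z (Suc i)) \<le> norm (z i))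
      then (\<Sum>j=0..n. (-1)^(n-j) *
              (\<Sum>Q\<in>{Q. Q \<subseteq> {1..n} \<and> card Q = j}.
                 F (Itrunc l P hm (z n) y + (\<Sum>i\<in>Q. hz i * l (z i - y)))))
      else 0)"

end

theory Submission
  imports Defs
begin

(* On the event that z_1,...,z_n are ordered by decreasing norm, the expansion
   kernel is an n-th order forward difference of F at x_0 = I_{z_n}(y,phi) >= 0 with
   increments b_i = h_{z_i} l(z_i - y) >= 0.  A forward difference in direction i is bounded
   either crudely by twice the lower-order difference, or, by the mean value theorem, by b_i
   times the difference of the derivative; choosing the second option exactly for the
   directions with b_i <= 1 bounds the kernel by F*_n prod_i min{1, b_i} (and otherwise it
   vanishes).  Taking expectations over the independent marks factorises the right-hand side
   into prod_i E[min{1, h l(z_i - y)}].  A layer-cake (Fubini) computation identifies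
   E[min{1, h c}] with the integral of G(a/c) over a in [0,1], and the trivial bounds
   min{1, h c} <= 1 and <= h c give the second inequality. *)

definition fdiff :: "(real \<Rightarrow> real) \<Rightarrow> ('i \<Rightarrow> real) \<Rightarrow> 'i set \<Rightarrow> real \<Rightarrow> real" where
  "fdiff g a S x = (\<Sum>Q\<in>Pow S. (-1) ^ (card S - card Q) * g (x + (\<Sum>i\<in>Q. a i)))"

lemma increment_bound:
  assumes "\<And>t. 0 \<le> t \<Longrightarrow> (f has_real_derivative f' t) (at t within {0..})"
    and "\<And>t. 0 \<le> t \<Longrightarrow> \<bar>f' t\<bar> \<le> R" and "0 \<le> x" "0 \<le> d"
  shows "\<bar>f (x + d) - f x\<bar> \<le> d * R"
  using field_differentiable_bound[of "{0..}" f f' R "x + d" x] assms by (auto simp: mult.commute)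

lemma fdiff_empty [simp]: "fdiff g a {} x = g x"
  by (simp add: fdiff_def)

lemma fdiff_insert:
  assumes S: "finite S" and i: "i \<notin> S"
  shows "fdiff g a (insert i S) x = fdiff g a S (x + a i) - fdiff g a S x"
proof -
  have disj: "Pow S \<inter> insert i ` Pow S = {}" using i by auto
  have inj: "inj_on (insert i) (Pow S)"
    using i unfolding inj_on_def by (metis Diff_insert_absorb PowD subsetD)
  have card_S: "card (insert i S) = Suc (card S)" using S i by simp
  have without_i: "(\<Sum>Q\<in>Pow S. (-1) ^ (card (insert i S) - card Q) * g (x + (\<Sum>j\<in>Q. a j)))
      = - fdiff g a S x"
    unfolding fdiff_def sum_negf[symmetric]
  proof (rule sum.cong[OF refl])
    fix Q assume "Q \<in> Pow S"
    then have "card Q \<le> card S" using S by (simp add: card_mono)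
    then show "(-1) ^ (card (insert i S) - card Q) * g (x + (\<Sum>j\<in>Q. a j))
        = - ((-1) ^ (card S - card Q) * g (x + (\<Sum>j\<in>Q. a j)))"
      using card_S by (simp add: Suc_diff_le)
  qed
  have with_i: "(\<Sum>Q\<in>insert i ` Pow S. (-1) ^ (card (insert i S) - card Q) * g (x + (\<Sum>j\<in>Q. a j)))
      = fdiff g a S (x + a i)"
    unfolding sum.reindex[OF inj] fdiff_def o_def
  proof (rule sum.cong[OF refl])
    fix Q assume "Q \<in> Pow S"
    then have "finite Q" "i \<notin> Q" using S i finite_subset by auto
    then show "(-1) ^ (card (insert i S) - card (insert i Q)) * g (x + (\<Sum>j\<in>insert i Q. a j))
        = (-1) ^ (card S - card Q) * g (x + a i + (\<Sum>j\<in>Q. a j))"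
      using card_S by (simp add: add.assoc)
  qed
  have fin: "finite (Pow S)" "finite (insert i ` Pow S)" using S by auto
  show ?thesis
    unfolding fdiff_def[of g a "insert i S"] Pow_insert sum.union_disjoint[OF fin disj]
    using without_i with_i by simp
qed

text \<open>Differentiation commutes with forward differences (the increments are non-negative,
  so all shifted points stay in the domain [0,oo)).\<close>
lemma fdiff_has_derivative:
  assumes a: "\<And>i. i \<in> S \<Longrightarrow> 0 \<le> a i"
    and g: "\<And>t. 0 \<le> t \<Longrightarrow> (g has_real_derivative g' t) (at t within {0..})"
    and x: "0 \<le> x"
  shows "(fdiff g a S has_real_derivative fdiff g' a S x) (at x within {0..})"
proof -
  have shifted: "((\<lambda>t. g (t + s)) has_real_derivative g' (x + s)) (at x within {0..})"
    if "0 \<le> s" for s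
  proof -
    have "(g has_real_derivative g' (x + s)) (at (x + s) within (\<lambda>t. t + s) ` {0..})"
      by (rule DERIV_subset[OF g]) (use that x in auto)
    moreover have "((\<lambda>t. t + s) has_real_derivative 1) (at x within {0..})"
      by (auto intro!: derivative_eq_intros)
    ultimately show ?thesis using DERIV_image_chain by (fastforce simp: o_def)
  qed
  have "0 \<le> (\<Sum>i\<in>Q. a i)" if "Q \<in> Pow S" for Q using that by (auto intro!: a sum_nonneg)
  then show ?thesis unfolding fdiff_def[abs_def]
    by (auto intro!: DERIV_sum DERIV_cmult shifted)
qed

text \<open>The key estimate: for every subset T of the directions, the difference is bounded by
  2 per direction outside T and, via the mean value theorem, by a i per direction in T at
  the price of one more derivative.\<close>
lemma fdiff_bound:
  fixes Fd :: "nat \<Rightarrow> real \<Rightarrow> real" and a :: "'i \<Rightarrow> real"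
  assumes Fd_deriv: "\<And>k t. 0 \<le> t \<Longrightarrow> (Fd k has_real_derivative Fd (Suc k) t) (at t within {0..})"
    and Fd_bound: "\<And>j t. j \<le> n \<Longrightarrow> 0 \<le> t \<Longrightarrow> \<bar>Fd j t\<bar> \<le> B j"
    and "finite S" "\<And>i. i \<in> S \<Longrightarrow> 0 \<le> a i" "T \<subseteq> S" "k + card T \<le> n" "0 \<le> x"
  shows "\<bar>fdiff (Fd k) a S x\<bar> \<le> 2 ^ (card S - card T) * B (k + card T) * (\<Prod>i\<in>T. a i)"
  using assms(3-7)
proof (induction S arbitrary: k T x rule: finite_induct)
  case empty
  then show ?case using Fd_bound by simp
next
  case (insert i S)
  have step: "fdiff (Fd k) a (insert i S) x = fdiff (Fd k) a S (x + a i) - fdiff (Fd k) a S x"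
    by (rule fdiff_insert[OF insert.hyps])
  have card_S: "card (insert i S) = Suc (card S)" using insert.hyps by simp
  have a_S: "\<And>j. j \<in> S \<Longrightarrow> 0 \<le> a j" and a_i: "0 \<le> a i" using insert.prems(1) by simp_all
  show ?case
  proof (cases "i \<in> T")
    case False
    then have "T \<subseteq> S" using insert.prems by auto
    then have "card T \<le> card S" using insert.hyps card_mono by blast
    then have "card (insert i S) - card T = Suc (card S - card T)" using card_S by simp
    moreover have lower_order: "\<bar>fdiff (Fd k) a S t\<bar> \<le> 2 ^ (card S - card T) * B (k + card T) * (\<Prod>i\<in>T. a i)"
      if "0 \<le> t" for t
      using insert.IH[OF a_S \<open>T \<subseteq> S\<close> _ that] insert.prems by simp
    note lower_order[of x] lower_order[of "x + a i"]
    ultimately show ?thesis unfolding step using a_i insert.prems(4) by simp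
  next
    case True
    define T' where "T' = T - {i}"
    have "T' \<subseteq> S" using insert.prems unfolding T'_def by auto
    have "finite T" using insert.prems insert.hyps finite_subset by blast
    then have card_T: "card T = Suc (card T')" and prod_T: "(\<Prod>j\<in>T. a j) = a i * (\<Prod>j\<in>T'. a j)"
      using True unfolding T'_def by (metis card_Suc_Diff1, metis prod.remove)
    define R where "R = 2 ^ (card S - card T') * B (Suc k + card T') * (\<Prod>j\<in>T'. a j)"
    have derivative_bound: "\<bar>fdiff (Fd (Suc k)) a S t\<bar> \<le> R" if "0 \<le> t" for t
      unfolding R_def using insert.IH[OF a_S \<open>T' \<subseteq> S\<close> _ that, of "Suc k"] insert.prems card_T by simp
    have derivative: "(fdiff (Fd k) a S has_real_derivative fdiff (Fd (Suc k)) a S t) (at t within {0..})"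
      if "0 \<le> t" for t
      using a_S Fd_deriv that by (rule fdiff_has_derivative)
    have "\<bar>fdiff (Fd k) a S (x + a i) - fdiff (Fd k) a S x\<bar> \<le> a i * R"
      by (rule increment_bound[OF derivative derivative_bound insert.prems(4) a_i])
    then show ?thesis
      unfolding step R_def prod_T using card_S card_T by (simp add: mult_ac)
  qed
qed

lemma emeasure_unit_interval_below:
  fixes c :: real
  shows "emeasure lborel ({0..1} \<inter> {..<c}) = ennreal (min 1 c)"
proof -
  consider "c \<le> 0" | "0 < c" "c \<le> 1" | "1 < c" by linarith
  then show ?thesis
  proof cases
    case 1
    then have eq: "{0..1} \<inter> {..<c} = {}" by auto
    show ?thesis unfolding eq using 1 by (simp add: ennreal_neg)
  next
    case 2
    then have eq: "{0..1} \<inter> {..<c} = {0..<c}" by auto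
    show ?thesis unfolding eq using 2 by simp
  next
    case 3
    then have eq: "{0..1} \<inter> {..<c} = {0..1}" by auto
    show ?thesis unfolding eq using 3 by simp
  qed
qed

lemma borel_measurable_eq_borel:
  fixes M :: "'a::topological_space measure"
  shows "sets M = sets borel \<Longrightarrow> borel_measurable M = borel_measurable borel"
  by (rule measurable_cong_sets) simp_all

lemma min_scaled_borel_measurable:
  fixes M :: "real measure" and c :: real
  assumes "sets M = sets borel"
  shows "(\<lambda>x. min 1 (x * c)) \<in> borel_measurable M"
  unfolding borel_measurable_eq_borel[OF assms] by measurable

text \<open>The complementary CDF is antitone, hence Borel measurable.\<close>
lemma ccdf_borel_measurable:
  assumes "prob_space M" and M_sets: "sets M = sets borel"
  shows "ccdf M \<in> borel_measurable borel"
proof -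
  interpret prob_space M by fact
  have "mono (\<lambda>t. - ccdf M t)"
  proof (rule monoI)
    fix t s :: real assume "t \<le> s"
    then have "{x. s < x} \<subseteq> {x. t < x}" by auto
    moreover have "{x. t < x} \<in> sets M" using M_sets by (simp add: greaterThan_def[symmetric])
    ultimately show "- ccdf M t \<le> - ccdf M s" unfolding ccdf_def by (simp add: finite_measure_mono)
  qed
  then have "(\<lambda>t. - (- ccdf M t)) \<in> borel_measurable borel"
    using borel_measurable_mono borel_measurable_uminus by blast
  then show ?thesis by simp
qed

definition expected_min :: "real measure \<Rightarrow> real \<Rightarrow> real" where
  "expected_min M c = (\<integral>x. min 1 (x * c) \<partial>M)"

text \<open>Layer-cake formula: min{1, x c} is the length of {a in [0,1]. a < x c}; exchanging
  the order of integration turns E[min{1, h c}] into the integral of P(h > a/c) over [0,1].\<close>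
lemma nn_integral_min_layer_cake:
  assumes "prob_space M" and M_sets: "sets M = sets borel" and c: "0 \<le> c"
  shows "(\<integral>\<^sup>+ x. ennreal (min 1 (x * c)) \<partial>M)
       = (\<integral>\<^sup>+ a. ennreal (indicator {0..1} a * ccdf_div M a c) \<partial>lborel)"
proof -
  interpret prob_space M by fact
  interpret pair_sigma_finite M lborel
    by (simp add: pair_sigma_finite_def lborel.sigma_finite_measure_axioms sigma_finite_measure_axioms)
  define A where "A = {p :: real \<times> real. 0 \<le> snd p \<and> snd p \<le> 1 \<and> snd p < fst p * c}"
  have "(indicator A :: real \<times> real \<Rightarrow> ennreal) \<in> borel_measurable (borel \<Otimes>\<^sub>M borel)"
    unfolding A_def by measurable
  then have meas: "(\<lambda>(x, a). indicator A (x, a) :: ennreal) \<in> borel_measurable (M \<Otimes>\<^sub>M lborel)"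
    by (simp add: measurable_cong_sets[OF sets_pair_measure_cong[OF M_sets sets_lborel] refl])
  have slice_x: "(\<integral>\<^sup>+ a. indicator A (x, a) \<partial>lborel) = ennreal (min 1 (x * c))" for x
  proof -
    have "indicator A (x, a) = (indicator ({0..1} \<inter> {..<x * c}) a :: ennreal)" for a
      unfolding A_def by (auto simp: indicator_def)
    then have "(\<integral>\<^sup>+ a. indicator A (x, a) \<partial>lborel) = emeasure lborel ({0..1} \<inter> {..<x * c})"
      by (simp only:) (rule nn_integral_indicator, simp)
    then show ?thesis by (simp only: emeasure_unit_interval_below)
  qed
  have slice_a: "(\<integral>\<^sup>+ x. indicator A (x, a) \<partial>M) = ennreal (indicator {0..1} a * ccdf_div M a c)" for a
  proof (cases "0 \<le> a \<and> a \<le> 1 \<and> c \<noteq> 0")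
    case True
    then have "indicator A (x, a) = (indicator {x. a / c < x} x :: ennreal)" for x
      using c unfolding A_def by (auto simp: indicator_def field_simps)
    then have "(\<integral>\<^sup>+ x. indicator A (x, a) \<partial>M) = emeasure M {x. a / c < x}"
      by (simp only:) (rule nn_integral_indicator, simp add: M_sets greaterThan_def[symmetric])
    then show ?thesis using True by (simp add: emeasure_eq_measure ccdf_div_def ccdf_def)
  next
    case False
    then have "indicator A (x, a) = (0 :: ennreal)" for x
      unfolding A_def by (auto simp: indicator_def)
    then show ?thesis using False by (auto simp: ccdf_div_def)
  qed
  have "(\<integral>\<^sup>+ x. ennreal (min 1 (x * c)) \<partial>M) = (\<integral>\<^sup>+ x. (\<integral>\<^sup>+ a. indicator A (x, a) \<partial>lborel) \<partial>M)"
    by (simp add: slice_x)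
  also have "\<dots> = (\<integral>\<^sup>+ a. (\<integral>\<^sup>+ x. indicator A (x, a) \<partial>M) \<partial>lborel)"
    using Fubini'[OF meas] by simp
  also have "\<dots> = (\<integral>\<^sup>+ a. ennreal (indicator {0..1} a * ccdf_div M a c) \<partial>lborel)"
    by (simp add: slice_a)
  finally show ?thesis .
qed

lemma expected_min_eq_nn_integral:
  assumes "sets M = sets borel" "AE x in M. 0 \<le> x" "0 \<le> c"
  shows "expected_min M c = enn2real (\<integral>\<^sup>+ x. ennreal (min 1 (x * c)) \<partial>M)"
  unfolding expected_min_def
  by (rule integral_eq_nn_integral[OF min_scaled_borel_measurable[OF assms(1)]])
    (use assms(2,3) in \<open>auto elim: AE_mp\<close>)

lemma ccdf_integral_eq_expected_min:
  assumes "prob_space M" "sets M = sets borel" "AE x in M. 0 \<le> x" and c: "0 \<le> c"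
  shows "(LBINT a=0..1. ccdf_div M a c) = expected_min M c"
proof -
  have "(\<lambda>a. ccdf M (a / c)) \<in> borel_measurable borel"
    using ccdf_borel_measurable[OF assms(1,2)] by measurable
  then have meas: "(\<lambda>a. ccdf_div M a c) \<in> borel_measurable borel"
    by (simp add: ccdf_div_def)
  have nonneg: "0 \<le> ccdf_div M a c" for a by (simp add: ccdf_div_def ccdf_def)
  have "(LBINT a=0..1. ccdf_div M a c) = (LBINT a:{0..1}. ccdf_div M a c)"
    using interval_integral_Icc[of 0 1] by (simp add: zero_ereal_def one_ereal_def)
  also have "\<dots> = enn2real (\<integral>\<^sup>+ a. ennreal (indicator {0..1} a * ccdf_div M a c) \<partial>lborel)"
    using integral_eq_nn_integral[of "\<lambda>a. indicator {0..1} a * ccdf_div M a c" lborel] meas nonneg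
    by (simp add: set_lebesgue_integral_def)
  also have "\<dots> = expected_min M c"
    using nn_integral_min_layer_cake[OF assms(1,2) c] expected_min_eq_nn_integral[OF assms(2-4)] by simp
  finally show ?thesis .
qed

text \<open>E[min{1, h c}] <= min{1, E[h] c}, stated in the extended non-negative reals since E[h]
  may be infinite.\<close>
lemma expected_min_le:
  assumes "prob_space M" "sets M = sets borel" "AE x in M. 0 \<le> x" and c: "0 \<le> c"
  shows "ennreal (expected_min M c) \<le> min 1 ((\<integral>\<^sup>+ x. ennreal x \<partial>M) * ennreal c)"
proof -
  interpret prob_space M by fact
  define N where "N = (\<integral>\<^sup>+ x. ennreal (min 1 (x * c)) \<partial>M)"
  have "N \<le> (\<integral>\<^sup>+ x. 1 \<partial>M)" unfolding N_def by (rule nn_integral_mono) simp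
  then have N_le_1: "N \<le> 1" by (simp add: emeasure_space_1)
  have "N \<le> (\<integral>\<^sup>+ x. ennreal x * ennreal c \<partial>M)"
    unfolding N_def
  proof (rule nn_integral_mono)
    fix x :: real
    show "ennreal (min 1 (x * c)) \<le> ennreal x * ennreal c"
    proof (cases "0 \<le> x")
      case True
      have "ennreal (min 1 (x * c)) \<le> ennreal (x * c)" by (rule ennreal_leI) simp
      also have "\<dots> = ennreal x * ennreal c" using True c by (rule ennreal_mult)
      finally show ?thesis .
    next
      case False
      then have "min 1 (x * c) \<le> 0" using c by (simp add: mult_nonpos_nonneg min_le_iff_disj)
      then show ?thesis by (simp add: ennreal_neg)
    qed
  qed
  also have "\<dots> = (\<integral>\<^sup>+ x. ennreal x \<partial>M) * ennreal c"
    by (rule nn_integral_multc) (simp add: borel_measurable_eq_borel[OF assms(2)])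
  finally have N_le_mean: "N \<le> (\<integral>\<^sup>+ x. ennreal x \<partial>M) * ennreal c" .
  have "N < \<top>" using N_le_1 by (simp add: order_le_less_trans)
  then have "ennreal (expected_min M c) = N"
    using expected_min_eq_nn_integral[OF assms(2-4)] unfolding N_def[symmetric] by simp
  then show ?thesis using N_le_1 N_le_mean by simp
qed

lemma
  assumes "prob_space M" "sets M = sets borel" "AE x in M. 0 \<le> x"
    and c: "\<And>i. 0 \<le> c i" and "finite I"
  shows integrable_prod_min: "integrable (PiM I (\<lambda>_. M)) (\<lambda>hz. \<Prod>i\<in>I. min 1 (hz i * c i))"
    and integral_prod_min:
      "(\<integral>hz. (\<Prod>i\<in>I. min 1 (hz i * c i)) \<partial>PiM I (\<lambda>_. M)) = (\<Prod>i\<in>I. expected_min M (c i))"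
proof -
  interpret prob_space M by fact
  interpret product_sigma_finite "\<lambda>_. M"
    by (simp add: product_sigma_finite_def sigma_finite_measure_axioms)
  have "integrable M (\<lambda>x. min 1 (x * c i))" for i
  proof (rule integrable_const_bound[where B=1])
    show "AE x in M. norm (min 1 (x * c i)) \<le> 1"
      using assms(3) by eventually_elim (use c[of i] in auto)
    show "(\<lambda>x. min 1 (x * c i)) \<in> borel_measurable M"
      using assms(2) by (rule min_scaled_borel_measurable)
  qed
  then show "integrable (PiM I (\<lambda>_. M)) (\<lambda>hz. \<Prod>i\<in>I. min 1 (hz i * c i))"
    and "(\<integral>hz. (\<Prod>i\<in>I. min 1 (hz i * c i)) \<partial>PiM I (\<lambda>_. M)) = (\<Prod>i\<in>I. expected_min M (c i))"
    using product_integrable_prod[OF \<open>finite I\<close>, of "\<lambda>i x. min 1 (x * c i)"]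
      product_integral_prod[OF \<open>finite I\<close>, of "\<lambda>i x. min 1 (x * c i)"]
    by (simp_all add: expected_min_def)
qed

text \<open>An almost-everywhere bound by an integrable function bounds the integral; if f is not
  integrable its integral is 0 and the bound holds trivially.\<close>
lemma abs_integral_le_AE_bound:
  fixes f g :: "'a \<Rightarrow> real"
  assumes bound: "AE x in N. \<bar>f x\<bar> \<le> g x" and g: "integrable N g"
  shows "\<bar>\<integral>x. f x \<partial>N\<bar> \<le> (\<integral>x. g x \<partial>N)"
proof (cases "integrable N f")
  case True
  have "\<bar>\<integral>x. f x \<partial>N\<bar> \<le> (\<integral>x. \<bar>f x\<bar> \<partial>N)" using integral_norm_bound[of N f] by simp
  also have "\<dots> \<le> (\<integral>x. g x \<partial>N)" using True g bound by (intro integral_mono_AE) auto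
  finally show ?thesis .
next
  case False
  have "0 \<le> (\<integral>x. g x \<partial>N)" using bound by (intro integral_nonneg_AE) auto
  then show ?thesis using not_integrable_integral_eq[OF False] by simp
qed

definition weighted_derivative_norm :: "(nat \<Rightarrow> real \<Rightarrow> real) \<Rightarrow> nat \<Rightarrow> real" where
  "weighted_derivative_norm Fd n = Max ((\<lambda>k. 2 ^ (n - k) * supnorm0 (Fd k)) ` {0..n})"

lemma supnorm0_bound:
  assumes "bounded (f ` {0..})" "0 \<le> t"
  shows "\<bar>f t\<bar> \<le> supnorm0 f"
proof -
  obtain K where "\<forall>x\<in>f ` {0..}. \<bar>x\<bar> \<le> K" using assms(1) bounded_real by blast
  then have "bdd_above ((\<lambda>x. \<bar>f x\<bar>) ` {0..})" by (auto intro!: bdd_aboveI[of _ K])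
  then show ?thesis unfolding supnorm0_def by (rule cSUP_upper[rotated]) (use assms in simp)
qed

lemma weighted_derivative_norm_ge:
  "k \<le> n \<Longrightarrow> 2 ^ (n - k) * supnorm0 (Fd k) \<le> weighted_derivative_norm Fd n"
  unfolding weighted_derivative_norm_def by (rule Max_ge) auto

lemma weighted_derivative_norm_nonneg:
  assumes "bounded (Fd 0 ` {0..})"
  shows "0 \<le> weighted_derivative_norm Fd n"
proof -
  have "0 \<le> 2 ^ (n - 0) * supnorm0 (Fd 0)"
    using supnorm0_bound[OF assms, of 0] by simp
  also have "\<dots> \<le> weighted_derivative_norm Fd n" by (rule weighted_derivative_norm_ge) simp
  finally show ?thesis .
qed

lemma expansion_sum_eq_fdiff:
  "(\<Sum>j=0..n. (-1) ^ (n - j) * (\<Sum>Q\<in>{Q. Q \<subseteq> {1..n} \<and> card Q = j}. g (x + (\<Sum>i\<in>Q. b i))))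
     = fdiff g b {1..n} x"
proof -
  have card_le: "card ` Pow {1..n} \<subseteq> {0..n}"
    using card_mono[of "{1..n}"] by fastforce
  have "fdiff g b {1..n} x
      = (\<Sum>j=0..n. \<Sum>Q\<in>{Q \<in> Pow {1..n}. card Q = j}. (-1) ^ (n - card Q) * g (x + (\<Sum>i\<in>Q. b i)))"
    unfolding fdiff_def by (subst sum.group[OF _ _ card_le, symmetric]) simp_all
  also have "\<dots> = (\<Sum>j=0..n. (-1) ^ (n - j) * (\<Sum>Q\<in>{Q. Q \<subseteq> {1..n} \<and> card Q = j}. g (x + (\<Sum>i\<in>Q. b i))))"
    by (auto simp: sum_distrib_left intro!: sum.cong)
  finally show ?thesis by simp
qed

text \<open>Pointwise bound on the alternating sum: apply the forward difference estimate with T the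
  set of directions whose increment is at most 1.\<close>
lemma expansion_sum_bound:
  fixes Fd :: "nat \<Rightarrow> real \<Rightarrow> real" and b :: "nat \<Rightarrow> real"
  assumes Fd_deriv: "\<And>k t. 0 \<le> t \<Longrightarrow> (Fd k has_real_derivative Fd (Suc k) t) (at t within {0..})"
    and Fd_bounded: "\<And>k. k \<le> n \<Longrightarrow> bounded (Fd k ` {0..})"
    and b: "\<And>i. i \<in> {1..n} \<Longrightarrow> 0 \<le> b i" and x: "0 \<le> x"
  shows "\<bar>\<Sum>j=0..n. (-1) ^ (n - j) * (\<Sum>Q\<in>{Q. Q \<subseteq> {1..n} \<and> card Q = j}. Fd 0 (x + (\<Sum>i\<in>Q. b i)))\<bar>
     \<le> weighted_derivative_norm Fd n * (\<Prod>i\<in>{1..n}. min 1 (b i))"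
proof -
  define T where "T = {i \<in> {1..n}. b i \<le> 1}"
  have "T \<subseteq> {1..n}" unfolding T_def by auto
  then have card_T: "card T \<le> n" using card_mono[of "{1..n}" T] by simp
  have "\<bar>fdiff (Fd 0) b {1..n} x\<bar> \<le> 2 ^ (n - card T) * supnorm0 (Fd (card T)) * (\<Prod>i\<in>T. b i)"
    using fdiff_bound[where Fd=Fd and k=0 and B="\<lambda>j. supnorm0 (Fd j)", OF Fd_deriv supnorm0_bound[OF Fd_bounded]
        _ b \<open>T \<subseteq> {1..n}\<close> _ x] card_T by simp
  also have "(\<Prod>i\<in>T. b i) = (\<Prod>i\<in>{1..n}. min 1 (b i))"
    unfolding T_def prod.inter_filter[OF finite_atLeastAtMost] by (rule prod.cong) auto
  also have "2 ^ (n - card T) * supnorm0 (Fd (card T)) * (\<Prod>i\<in>{1..n}. min 1 (b i))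
      \<le> weighted_derivative_norm Fd n * (\<Prod>i\<in>{1..n}. min 1 (b i))"
    using b card_T by (intro mult_right_mono weighted_derivative_norm_ge prod_nonneg) auto
  finally show ?thesis by (simp only: expansion_sum_eq_fdiff)
qed

lemma expansion_kernel_AE_bound:
  fixes M :: "real measure" and Fd :: "nat \<Rightarrow> real \<Rightarrow> real"
  assumes "prob_space M" and h_nonneg: "AE x in M. 0 \<le> x"
    and l_nonneg: "\<And>x. 0 \<le> l x" and hm_nonneg: "\<And>x. x \<in> P \<Longrightarrow> 0 \<le> hm x"
    and Fd0: "Fd 0 = F"
    and Fd_deriv: "\<And>k t. 0 \<le> t \<Longrightarrow> (Fd k has_real_derivative Fd (Suc k) t) (at t within {0..})"
    and Fd_bounded: "\<And>k. k \<le> n \<Longrightarrow> bounded (Fd k ` {0..})"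
  shows "AE hz in PiM {1..n} (\<lambda>_. M). \<bar>expansion_kernel F l P hm n z hz y\<bar>
           \<le> weighted_derivative_norm Fd n * (\<Prod>i\<in>{1..n}. min 1 (hz i * l (z i - y)))"
proof -
  have "AE hz in PiM {1..n} (\<lambda>_. M). \<forall>i\<in>{1..n}. 0 \<le> hz i"
    by (rule AE_finite_allI) (auto intro!: AE_PiM_component assms(1) h_nonneg)
  then show ?thesis
  proof eventually_elim
    case (elim hz)
    then have b_nonneg: "0 \<le> hz i * l (z i - y)" if "i \<in> {1..n}" for i
      using that l_nonneg by simp
    have "0 \<le> Itrunc l P hm (z n) y"
      unfolding Itrunc_def by (rule sum_nonneg) (use hm_nonneg l_nonneg in auto)
    from expansion_sum_bound[where Fd=Fd and n=n, OF Fd_deriv Fd_bounded b_nonneg this]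
    have bound: "\<bar>expansion_kernel F l P hm n z hz y\<bar>
        \<le> weighted_derivative_norm Fd n * (\<Prod>i\<in>{1..n}. min 1 (hz i * l (z i - y)))"
      if "\<forall>i\<in>{1..<n}. norm (z (Suc i)) \<le> norm (z i)"
      using that unfolding expansion_kernel_def Fd0 by simp
    have "0 \<le> weighted_derivative_norm Fd n * (\<Prod>i\<in>{1..n}. min 1 (hz i * l (z i - y)))"
      using weighted_derivative_norm_nonneg[OF Fd_bounded] b_nonneg
      by (intro mult_nonneg_nonneg prod_nonneg) auto
    then show ?case using bound unfolding expansion_kernel_def by auto
  qed
qed

lemma ennreal_expected_min_prod_le:
  fixes M :: "real measure"
  assumes "prob_space M" "sets M = sets borel" "AE x in M. 0 \<le> x"
    and c: "\<And>i. 0 \<le> c i" and C: "0 \<le> C"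
  shows "ennreal (C * (\<Prod>i\<in>I. expected_min M (c i)))
      \<le> ennreal C * (\<Prod>i\<in>I. min 1 ((\<integral>\<^sup>+ x. ennreal x \<partial>M) * ennreal (c i)))"
proof -
  have nonneg: "0 \<le> expected_min M (c i)" for i
    using expected_min_eq_nn_integral[OF assms(2,3) c] by simp
  have "ennreal (C * (\<Prod>i\<in>I. expected_min M (c i))) = ennreal C * (\<Prod>i\<in>I. ennreal (expected_min M (c i)))"
    using C nonneg by (simp add: ennreal_mult prod_nonneg prod_ennreal)
  also have "\<dots> \<le> ennreal C * (\<Prod>i\<in>I. min 1 ((\<integral>\<^sup>+ x. ennreal x \<partial>M) * ennreal (c i)))"
    using expected_min_le[OF assms(1-3) c] by (intro mult_left_mono prod_mono_ennreal) auto
  finally show ?thesis .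
qed

theorem mainTheorem3:
  fixes M :: "real measure" and l :: "real^2 \<Rightarrow> real"
    and F :: "real \<Rightarrow> real" and Fd :: "nat \<Rightarrow> real \<Rightarrow> real" and n :: nat
    and y :: "real^2" and P :: "(real^2) set" and hm :: "real^2 \<Rightarrow> real"
    and z :: "nat \<Rightarrow> real^2"
  assumes M_prob: "prob_space M" and M_sets: "sets M = sets borel"
    and h_nonneg: "AE x in M. 0 \<le> x"
    and l_nonneg: "\<And>x. 0 \<le> l x"
    and l_radial: "\<And>x x'. norm x = norm x' \<Longrightarrow> l x = l x'"
    and F_nonneg: "\<And>x. 0 \<le> x \<Longrightarrow> 0 \<le> F x"
    and Fd0: "Fd 0 = F"
    and Fd_deriv: "\<And>k x. 0 \<le> x \<Longrightarrow> (Fd k has_real_derivative Fd (Suc k) x) (at x within {0..})"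
    and Fd_bounded: "\<And>k. k \<le> n \<Longrightarrow> bounded (Fd k ` {0..})"
    and n_pos: "1 \<le> n"
    and P_locfin: "\<And>S. bounded S \<Longrightarrow> finite (P \<inter> S)"
    and hm_nonneg: "\<And>x. x \<in> P \<Longrightarrow> 0 \<le> hm x"
  shows "\<bar>\<integral>hz. expansion_kernel F l P hm n z hz y \<partial>(PiM {1..n} (\<lambda>_. M))\<bar>
           \<le> Max ((\<lambda>k. 2^(n-k) * supnorm0 (Fd k)) ` {0..n})
              * (\<Prod>i\<in>{1..n}. (LBINT a=0..1. ccdf_div M a (l (z i - y))))
       \<and> ennreal (Max ((\<lambda>k. 2^(n-k) * supnorm0 (Fd k)) ` {0..n})
              * (\<Prod>i\<in>{1..n}. (LBINT a=0..1. ccdf_div M a (l (z i - y)))))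
           \<le> ennreal (Max ((\<lambda>k. 2^(n-k) * supnorm0 (Fd k)) ` {0..n}))
              * (\<Prod>i\<in>{1..n}. min 1 ((\<integral>\<^sup>+ x. ennreal x \<partial>M) * ennreal (l (z i - y))))"
proof -
  define c where "c i = l (z i - y)" for i
  define C where "C = weighted_derivative_norm Fd n"
  have c_nonneg: "\<And>i. 0 \<le> c i" unfolding c_def by (rule l_nonneg)
  have C_nonneg: "0 \<le> C" unfolding C_def by (rule weighted_derivative_norm_nonneg) (simp add: Fd_bounded)
  have ccdf_eq: "(LBINT a=0..1. ccdf_div M a (c i)) = expected_min M (c i)" for i
    by (rule ccdf_integral_eq_expected_min[OF M_prob M_sets h_nonneg c_nonneg])
  have kernel_bound: "AE hz in PiM {1..n} (\<lambda>_. M).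
      \<bar>expansion_kernel F l P hm n z hz y\<bar> \<le> C * (\<Prod>i\<in>{1..n}. min 1 (hz i * c i))"
    unfolding C_def c_def
    by (rule expansion_kernel_AE_bound[OF M_prob h_nonneg l_nonneg hm_nonneg Fd0 Fd_deriv Fd_bounded])
  have "integrable (PiM {1..n} (\<lambda>_. M)) (\<lambda>hz. C * (\<Prod>i\<in>{1..n}. min 1 (hz i * c i)))"
    by (intro integrable_mult_right integrable_prod_min[where c=c, OF M_prob M_sets h_nonneg c_nonneg]) simp
  with kernel_bound have "\<bar>\<integral>hz. expansion_kernel F l P hm n z hz y \<partial>PiM {1..n} (\<lambda>_. M)\<bar>
      \<le> (\<integral>hz. C * (\<Prod>i\<in>{1..n}. min 1 (hz i * c i)) \<partial>PiM {1..n} (\<lambda>_. M))"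
    by (rule abs_integral_le_AE_bound)
  also have "\<dots> = C * (\<Prod>i\<in>{1..n}. expected_min M (c i))"
    using integral_prod_min[where c=c, OF M_prob M_sets h_nonneg c_nonneg finite_atLeastAtMost] by simp
  finally show ?thesis
    using ennreal_expected_min_prod_le[where c=c, OF M_prob M_sets h_nonneg c_nonneg C_nonneg]
    unfolding C_def weighted_derivative_norm_def c_def[symmetric] ccdf_eq by simp
qed

end
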